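(* Let $F,G$ be planar forests, and let $S(F,G)$ be the set of bijections $\sigma:\mathrm{Vert}(F)\to\mathrm{Vert}(G)$ such that for all vertices $x,y$ of $F$: (1) if $y\geq_{high}x$ then $\sigma(x)\geq_{left}\sigma(y)$; (2) if $y\geq_{left}x$ then $\sigma(x)\geq_{h,l}\sigma(y)$; (3) if $\sigma(y)\geq_{high}\sigma(x)$ then $x\geq_{left}y$; (4) if $\sigma(y)\geq_{left}\sigma(x)$ then $x\geq_{h,l}y$. Then $\langle F,G\rangle=\mathrm{card}(S(F,G))$.
   Context: Let $K$ be a field. Planar rooted trees have their children linearly ordered left to right; a planar forest is a finite, possibly empty, sequence $t_1\cdots t_n$ of planar rooted trees ($1$ = empty forest); $\mathrm{Vert}(F)$ is the vertex set of $F$. $\mathcal{H}$ is the free associative unital $K$-algebra on planar rooted trees, with basis the planar forests and product concatenation. $B^+(F)$ is the tree obtained by grafting the trees of $F$ (in order) on a new common root. $\varepsilon(F)=\delta_{F,1}$. $\Delta$ is the unique linear map with $\Delta(1)=1\otimes1$, $\Delta(xy)=(x\otimes1)\Delta(y)+\Delta(x)(1\otimes y)-x\otimes y$, $\Delta(B^+(x))=B^+(x)\otimes 1+(\mathrm{Id}\otimes B^+)\Delta(x)$. $\gamma$ is linear with $\gamma(t_1\cdots t_n)=\delta_{t_1,\bullet}t_2\cdots t_n$ ($\bullet$ the one-vertex tree), $\gamma(1)=0$. $\langle-,-\rangle$ is the unique bilinear form on $\mathcal{H}$ with $\langle1,x\rangle=\varepsilon(x)$, $\langle xy,z\rangle=\langle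 y\otimes x,\Delta(z)\rangle$ (with $\langle a\otimes b,c\otimes d\rangle=\langle a,c\rangle\langle b,d\rangle$) and $\langle B^+(x),y\rangle=\langle x,\gamma(y)\rangle$. Orders on vertices of a forest $t_1\cdots t_n$: $s\geq_{high}s'$ iff $s'=s$ or $s'$ is an ancestor of $s$; for $\geq_{high}$-incomparable $s,s'$, $s\geq_{left}s'$ iff $s\in t_i,s'\in t_j$ with $i<j$, or both lie in $t_i$ and $s\geq_{left}s'$ in the forest obtained from $t_i$ by deleting its root (recursively); $s\geq_{h,l}s'$ iff $s\geq_{high}s'$ or $s\geq_{left}s'$ (a total order). *)

theory Defs
  imports "HOL-Library.Poly_Mapping" "HOL-Library.FuncSet" "HOL-Library.Sublist"
begin

text \<open>A planar rooted tree is a root together with the (left-to-right ordered) list of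
  its subtrees; a planar forest is a (possibly empty) list of planar trees.\<close>

datatype ptree = Node "ptree list"

type_synonym pforest = "ptree list"

abbreviation dot :: ptree where "dot \<equiv> Node []"

definition Bplus :: "pforest \<Rightarrow> pforest" where
  "Bplus F = [Node F]"

text \<open>An element of H is a finitely supported K-linear combination of planar forests;
  an element of H (x) H is a finitely supported linear combination of pairs of forests
  (basis F (x) G).  The product of H is concatenation of forests.\<close>

type_synonym 'k hopf = "pforest \<Rightarrow>\<^sub>0 'k"
type_synonym 'k hopf2 = "(pforest \<times> pforest) \<Rightarrow>\<^sub>0 'k"

definition tens :: "pforest \<Rightarrow> pforest \<Rightarrow> 'k::field hopf2" where
  "tens F G = Poly_Mapping.single (F, G) 1"

text \<open>(x (x) 1) * T for a basis forest x\<close>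
definition lmul :: "pforest \<Rightarrow> 'k::field hopf2 \<Rightarrow> 'k hopf2" where
  "lmul x T = (\<Sum>k\<in>Poly_Mapping.keys T. Poly_Mapping.single (x @ fst k, snd k) (Poly_Mapping.lookup T k))"

text \<open>T * (1 (x) y) for a basis forest y\<close>
definition rmul :: "'k::field hopf2 \<Rightarrow> pforest \<Rightarrow> 'k hopf2" where
  "rmul T y = (\<Sum>k\<in>Poly_Mapping.keys T. Poly_Mapping.single (fst k, snd k @ y) (Poly_Mapping.lookup T k))"

text \<open>(Id (x) B+) T\<close>
definition id_Bplus :: "'k::field hopf2 \<Rightarrow> 'k hopf2" where
  "id_Bplus T = (\<Sum>k\<in>Poly_Mapping.keys T. Poly_Mapping.single (fst k, Bplus (snd k)) (Poly_Mapping.lookup T k))"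

definition eps :: "pforest \<Rightarrow> 'k::field" where
  "eps F = (if F = [] then 1 else 0)"

text \<open>The coproduct is the unique linear map with the three stated properties. A linear
  map is determined by its values on the basis of forests, and the product of two basis
  forests is again a basis forest, so the properties (for all x, y in H) amount to the
  following properties of the values on basis forests.\<close>

definition is_coproduct :: "(pforest \<Rightarrow> 'k::field hopf2) \<Rightarrow> bool" where
  "is_coproduct D \<longleftrightarrow>
     D [] = tens [] [] \<and>
     (\<forall>x y. D (x @ y) = lmul x (D y) + rmul (D x) y - tens x y) \<and>
     (\<forall>x. D (Bplus x) = tens (Bplus x) [] + id_Bplus (D x))"

definition Delta :: "pforest \<Rightarrow> 'k::field hopf2" where
  "Delta = (THE D. is_coproduct D)"

definition gamma :: "pforest \<Rightarrow> 'k::field hopf" where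
  "gamma F = (case F of (t # G) \<Rightarrow> (if t = dot then Poly_Mapping.single G 1 else 0)
                       | [] \<Rightarrow> 0)"

text \<open>A bilinear form on H is determined by its values p F G on pairs of basis forests;
  its bilinear extension is the following.\<close>

definition pair_ext :: "(pforest \<Rightarrow> pforest \<Rightarrow> 'k::field) \<Rightarrow> 'k hopf \<Rightarrow> 'k hopf \<Rightarrow> 'k" where
  "pair_ext p a b = (\<Sum>F\<in>Poly_Mapping.keys a. \<Sum>G\<in>Poly_Mapping.keys b. Poly_Mapping.lookup a F * Poly_Mapping.lookup b G * p F G)"

text \<open>pairing of H (x) H with H (x) H: <a (x) b, c (x) d> = <a,c><b,d>, for a (x) b = y (x) x
  with y, x basis forests.\<close>
definition pair_tens :: "(pforest \<Rightarrow> pforest \<Rightarrow> 'k::field) \<Rightarrow> pforest \<Rightarrow> pforest \<Rightarrow> 'k hopf2 \<Rightarrow> 'k" where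
  "pair_tens p a b T = (\<Sum>k\<in>Poly_Mapping.keys T. Poly_Mapping.lookup T k * p a (fst k) * p b (snd k))"

text \<open>The defining properties of the pairing, for all x, y, z in H; by bilinearity it
  suffices (and is necessary) to require them on basis forests.\<close>
definition is_pairing :: "(pforest \<Rightarrow> pforest \<Rightarrow> 'k::field) \<Rightarrow> bool" where
  "is_pairing p \<longleftrightarrow>
     (\<forall>z. p [] z = eps z) \<and>
     (\<forall>x y z. p (x @ y) z = pair_tens p y x (Delta z)) \<and>
     (\<forall>x y. p (Bplus x) y = pair_ext p (Poly_Mapping.single x 1) (gamma y))"

definition pairing :: "pforest \<Rightarrow> pforest \<Rightarrow> 'k::field" where
  "pairing = (THE p. is_pairing p)"

text \<open>A vertex of a forest t1...tn is encoded by its address: the nonempty list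
  [i, c1, ..., cm] meaning: tree t_(i+1), then child number c1 of its root, etc.
  (0-based indices).\<close>

fun tree_verts :: "ptree \<Rightarrow> nat list set"
and forest_verts_from :: "nat \<Rightarrow> pforest \<Rightarrow> nat list set" where
  "tree_verts (Node ts) = insert [] (forest_verts_from 0 ts)"
| "forest_verts_from n [] = {}"
| "forest_verts_from n (t # ts) = (Cons n ` tree_verts t) \<union> forest_verts_from (Suc n) ts"

definition Vert :: "pforest \<Rightarrow> nat list set" where
  "Vert F = forest_verts_from 0 F"

text \<open>s >=_high s' iff s' = s or s' is an ancestor of s, i.e. the address of s' is a
  prefix of the address of s.\<close>
definition geq_high :: "nat list \<Rightarrow> nat list \<Rightarrow> bool" where
  "geq_high s s' \<longleftrightarrow> prefix s' s"

text \<open>The recursive left-to-right comparison: s in t_i, s' in t_j with i < j, or both in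
  the same tree and recursively in the forest obtained by deleting its root.\<close>
fun left_rec :: "nat list \<Rightarrow> nat list \<Rightarrow> bool" where
  "left_rec (i # p) (j # q) = (i < j \<or> (i = j \<and> left_rec p q))"
| "left_rec _ _ = False"

definition geq_left :: "nat list \<Rightarrow> nat list \<Rightarrow> bool" where
  "geq_left s s' \<longleftrightarrow> \<not> geq_high s s' \<and> \<not> geq_high s' s \<and> left_rec s s'"

definition geq_hl :: "nat list \<Rightarrow> nat list \<Rightarrow> bool" where
  "geq_hl s s' \<longleftrightarrow> geq_high s s' \<or> geq_left s s'"

text \<open>The four conditions are imposed for distinct vertices x, y (for x = y condition (1)
  would demand sigma(x) >=_left sigma(x), which never holds, making S(F,G) empty; the
  orders are meant strictly).\<close>

definition Sbij :: "pforest \<Rightarrow> pforest \<Rightarrow> (nat list \<Rightarrow> nat list) set" where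
  "Sbij F G = {\<sigma>. \<sigma> \<in> extensional (Vert F) \<and> bij_betw \<sigma> (Vert F) (Vert G) \<and>
     (\<forall>x\<in>Vert F. \<forall>y\<in>Vert F. x \<noteq> y \<longrightarrow>
        (geq_high y x \<longrightarrow> geq_left (\<sigma> x) (\<sigma> y)) \<and>
        (geq_left y x \<longrightarrow> geq_hl (\<sigma> x) (\<sigma> y)) \<and>
        (geq_high (\<sigma> y) (\<sigma> x) \<longrightarrow> geq_left x y) \<and>
        (geq_left (\<sigma> y) (\<sigma> x) \<longrightarrow> geq_hl x y))}"

end

theory Submission
  imports Defs
begin

text \<open>The pairing is determined by its three defining identities (by induction on the size of
  its left argument), so it suffices to show that \<open>F, G \<mapsto> card S(F,G)\<close> satisfies them.
  The coproduct of a forest \<open>z\<close> is \<open>\<Sum>\<^sub>k top\<^sub>k(z) \<otimes> bot\<^sub>k(z)\<close>, where \<open>top\<^sub>k(z)\<close> consists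
  of the \<open>k\<close> greatest vertices of \<open>z\<close> for \<open>\<ge>\<^sub>h\<^sub>,\<^sub>l\<close>.  In a product \<open>xy\<close> every vertex of \<open>y\<close>
  lies to the right of every vertex of \<open>x\<close>; the four conditions force an element of
  \<open>S(xy,z)\<close> to map the vertices of \<open>y\<close> onto the greatest vertices of \<open>z\<close>, while all
  pairs across the two blocks satisfy the conditions automatically.  Hence
  \<open>S(xy,z) \<cong> S(y,top\<^sub>k(z)) \<times> S(x,bot\<^sub>k(z))\<close> for \<open>k\<close> the number of vertices of \<open>y\<close>, and all
  other terms of the coproduct vanish for cardinality reasons.  In \<open>B\<^sup>+(x)\<close> the root is
  an ancestor of every vertex, so by (1) its image lies to the left of all other vertices:
  it is the root of the first tree of \<open>G\<close>, which therefore has no other vertex, and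
  removing both roots identifies \<open>S(B\<^sup>+(x), \<bullet>G')\<close> with \<open>S(x,G')\<close>.\<close>

definition pushforward :: "('a \<Rightarrow> 'b) \<Rightarrow> ('a \<Rightarrow>\<^sub>0 'k::field) \<Rightarrow> ('b \<Rightarrow>\<^sub>0 'k)" where
  "pushforward f T = (\<Sum>k\<in>Poly_Mapping.keys T. Poly_Mapping.single (f k) (Poly_Mapping.lookup T k))"

lemma pushforward_superset:
  assumes "finite S" "Poly_Mapping.keys T \<subseteq> S"
  shows "pushforward f T = (\<Sum>k\<in>S. Poly_Mapping.single (f k) (Poly_Mapping.lookup T k))"
  unfolding pushforward_def
  by (rule sum.mono_neutral_left) (auto simp: assms in_keys_iff)

lemma pushforward_add: "pushforward f (A + B) = pushforward f A + pushforward f B"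
proof -
  let ?S = "Poly_Mapping.keys A \<union> Poly_Mapping.keys B"
  have "pushforward f (A + B) = (\<Sum>k\<in>?S. Poly_Mapping.single (f k) (Poly_Mapping.lookup (A + B) k))"
    by (rule pushforward_superset) (auto simp: keys_add)
  also have "\<dots> = (\<Sum>k\<in>?S. Poly_Mapping.single (f k) (Poly_Mapping.lookup A k))
     + (\<Sum>k\<in>?S. Poly_Mapping.single (f k) (Poly_Mapping.lookup B k))"
    by (simp add: lookup_add single_add sum.distrib)
  also have "\<dots> = pushforward f A + pushforward f B"
    by (subst (1 2) pushforward_superset[of ?S]) auto
  finally show ?thesis .
qed

lemma pushforward_zero [simp]: "pushforward f 0 = 0"
  by (simp add: pushforward_def)

lemma pushforward_single [simp]:
  "pushforward f (Poly_Mapping.single k c) = Poly_Mapping.single (f k) c"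
  by (cases "c = 0") (simp_all add: pushforward_def)

lemma pushforward_sum: "pushforward f (\<Sum>i\<in>I. T i) = (\<Sum>i\<in>I. pushforward f (T i))"
  by (induction I rule: infinite_finite_induct) (simp_all add: pushforward_add)

definition linear_ext :: "('a \<Rightarrow> 'k::field) \<Rightarrow> ('a \<Rightarrow>\<^sub>0 'k) \<Rightarrow> 'k" where
  "linear_ext g T = (\<Sum>k\<in>Poly_Mapping.keys T. Poly_Mapping.lookup T k * g k)"

lemma linear_ext_superset:
  assumes "finite S" "Poly_Mapping.keys T \<subseteq> S"
  shows "linear_ext g T = (\<Sum>k\<in>S. Poly_Mapping.lookup T k * g k)"
  unfolding linear_ext_def
  by (rule sum.mono_neutral_left) (auto simp: assms in_keys_iff)

lemma linear_ext_add: "linear_ext g (A + B) = linear_ext g A + linear_ext g B"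
proof -
  let ?S = "Poly_Mapping.keys A \<union> Poly_Mapping.keys B"
  have "linear_ext g (A + B) = (\<Sum>k\<in>?S. Poly_Mapping.lookup (A + B) k * g k)"
    by (rule linear_ext_superset) (auto simp: keys_add)
  also have "\<dots> = (\<Sum>k\<in>?S. Poly_Mapping.lookup A k * g k) + (\<Sum>k\<in>?S. Poly_Mapping.lookup B k * g k)"
    by (simp add: lookup_add sum.distrib algebra_simps)
  also have "\<dots> = linear_ext g A + linear_ext g B"
    by (subst (1 2) linear_ext_superset[of ?S]) auto
  finally show ?thesis .
qed

lemma linear_ext_zero [simp]: "linear_ext g 0 = 0"
  by (simp add: linear_ext_def)

lemma linear_ext_single [simp]: "linear_ext g (Poly_Mapping.single k c) = c * g k"
  by (cases "c = 0") (simp_all add: linear_ext_def)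

lemma linear_ext_sum: "linear_ext g (\<Sum>i\<in>I. T i) = (\<Sum>i\<in>I. linear_ext g (T i))"
  by (induction I rule: infinite_finite_induct) (simp_all add: linear_ext_add)

lemma lmul_eq_pushforward: "lmul x = pushforward (\<lambda>k. (x @ fst k, snd k))"
  by (rule ext) (simp add: lmul_def pushforward_def)

lemma rmul_eq_pushforward: "rmul T y = pushforward (\<lambda>k. (fst k, snd k @ y)) T"
  by (simp add: rmul_def pushforward_def)

lemma id_Bplus_eq_pushforward: "id_Bplus = pushforward (\<lambda>k. (fst k, Bplus (snd k)))"
  by (rule ext) (simp add: id_Bplus_def pushforward_def)

lemma pair_tens_eq_linear_ext: "pair_tens p a b T = linear_ext (\<lambda>k. p a (fst k) * p b (snd k)) T"
  by (simp add: pair_tens_def linear_ext_def mult.assoc)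

lemma lmul_tens [simp]: "lmul x (tens a b) = tens (x @ a) b"
  by (simp add: lmul_eq_pushforward tens_def)

lemma rmul_tens [simp]: "rmul (tens a b) y = tens a (b @ y)"
  by (simp add: rmul_eq_pushforward tens_def)

lemma id_Bplus_tens [simp]: "id_Bplus (tens a b) = tens a (Bplus b)"
  by (simp add: id_Bplus_eq_pushforward tens_def)

lemma lmul_sum: "lmul x (\<Sum>i\<in>I. T i) = (\<Sum>i\<in>I. lmul x (T i))"
  by (simp add: lmul_eq_pushforward pushforward_sum)

lemma rmul_sum: "rmul (\<Sum>i\<in>I. T i) y = (\<Sum>i\<in>I. rmul (T i) y)"
  by (simp add: rmul_eq_pushforward pushforward_sum)

lemma id_Bplus_sum: "id_Bplus (\<Sum>i\<in>I. T i) = (\<Sum>i\<in>I. id_Bplus (T i))"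
  by (simp add: id_Bplus_eq_pushforward pushforward_sum)

section \<open>The coproduct as a sum over cuts\<close>

lemma forest_induct [case_names Nil Node]:
  assumes "P []" "\<And>f ts. P f \<Longrightarrow> P ts \<Longrightarrow> P (Node f # ts)"
  shows "P F"
proof (induction F rule: measure_induct_rule[of "size_list size"])
  case (less F)
  show ?case
  proof (cases F)
    case Nil then show ?thesis using assms(1) by simp
  next
    case (Cons t ts)
    obtain f where "t = Node f" by (cases t)
    then show ?thesis using less Cons assms(2) by simp
  qed
qed

fun nverts :: "pforest \<Rightarrow> nat" where
  "nverts [] = 0"
| "nverts (Node f # ts) = Suc (nverts f) + nverts ts"

lemma nverts_append [simp]: "nverts (x @ y) = nverts x + nverts y"
  by (induction x rule: forest_induct) auto

text \<open>\<open>cut_top k z\<close> is the forest formed by the \<open>k\<close> greatest vertices of \<open>z\<close> for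
  \<open>\<ge>\<^sub>h\<^sub>,\<^sub>l\<close>, and \<open>cut_bot k z\<close> the forest formed by the remaining ones.\<close>

fun cut_top :: "nat \<Rightarrow> pforest \<Rightarrow> pforest" where
  "cut_top k [] = []"
| "cut_top k (Node f # ts) =
     (if Suc (nverts f) \<le> k then Node f # cut_top (k - Suc (nverts f)) ts else cut_top k f)"

fun cut_bot :: "nat \<Rightarrow> pforest \<Rightarrow> pforest" where
  "cut_bot k [] = []"
| "cut_bot k (Node f # ts) =
     (if Suc (nverts f) \<le> k then cut_bot (k - Suc (nverts f)) ts else Node (cut_bot k f) # ts)"

lemma cut_top_all: "cut_top (nverts x) x = x"
  by (induction x rule: forest_induct) auto

lemma cut_bot_all: "cut_bot (nverts x) x = []"
  by (induction x rule: forest_induct) auto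

lemma cut_top_append:
  "cut_top k (x @ y) = (if nverts x \<le> k then x @ cut_top (k - nverts x) y else cut_top k x)"
  by (induction x arbitrary: k rule: forest_induct) (auto simp: cut_top_all)

lemma cut_bot_append:
  "cut_bot k (x @ y) = (if nverts x \<le> k then cut_bot (k - nverts x) y else cut_bot k x @ y)"
  by (induction x arbitrary: k rule: forest_induct) (auto simp: cut_bot_all)

lemma nverts_cut_top: "k \<le> nverts z \<Longrightarrow> nverts (cut_top k z) = k"
  by (induction k z rule: cut_top.induct) auto

definition cut_coproduct :: "pforest \<Rightarrow> 'k::field hopf2" where
  "cut_coproduct z = (\<Sum>k\<in>{0..nverts z}. tens (cut_top k z) (cut_bot k z))"

lemma cut_coproduct_append:
  "(cut_coproduct (x @ y) :: 'k::field hopf2)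
     = lmul x (cut_coproduct y) + rmul (cut_coproduct x) y - tens x y"
proof -
  let ?nx = "nverts x" and ?ny = "nverts y"
  let ?low = "\<Sum>k\<in>{0..<?nx}. tens (cut_top k x) (cut_bot k x @ y) :: 'k hopf2"
  have split: "{0..?nx + ?ny} = {0..<?nx} \<union> {?nx..?nx + ?ny}" by auto
  have "(cut_coproduct (x @ y) :: 'k hopf2)
      = (\<Sum>k\<in>{0..<?nx}. tens (cut_top k (x @ y)) (cut_bot k (x @ y)))
      + (\<Sum>k\<in>{?nx..?nx + ?ny}. tens (cut_top k (x @ y)) (cut_bot k (x @ y)))"
    unfolding cut_coproduct_def nverts_append split by (rule sum.union_disjoint) auto
  also have "(\<Sum>k\<in>{0..<?nx}. tens (cut_top k (x @ y)) (cut_bot k (x @ y)) :: 'k hopf2) = ?low"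
    by (rule sum.cong) (auto simp: cut_top_append cut_bot_append)
  also have "(\<Sum>k\<in>{?nx..?nx + ?ny}. tens (cut_top k (x @ y)) (cut_bot k (x @ y)) :: 'k hopf2)
      = (\<Sum>k\<in>{?nx..?nx + ?ny}. tens (x @ cut_top (k - ?nx) y) (cut_bot (k - ?nx) y))"
    by (rule sum.cong) (auto simp: cut_top_append cut_bot_append)
  also have "\<dots> = (\<Sum>j\<in>{0..?ny}. tens (x @ cut_top j y) (cut_bot j y))"
    by (rule sum.reindex_bij_witness[of _ "\<lambda>j. j + ?nx" "\<lambda>k. k - ?nx"]) auto
  also have "\<dots> = lmul x (cut_coproduct y)"
    by (simp add: cut_coproduct_def lmul_sum)
  moreover have "rmul (cut_coproduct x) y = (\<Sum>k\<in>{0..?nx}. tens (cut_top k x) (cut_bot k x @ y) :: 'k hopf2)"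
    by (simp add: cut_coproduct_def rmul_sum)
  moreover have "\<dots> = ?low + tens x y"
    by (simp add: atLeast0AtMost atLeast0LessThan lessThan_Suc_atMost[symmetric] cut_top_all cut_bot_all)
  ultimately show ?thesis by (simp add: algebra_simps)
qed

lemma cut_coproduct_Bplus:
  "(cut_coproduct (Bplus x) :: 'k::field hopf2) = tens (Bplus x) [] + id_Bplus (cut_coproduct x)"
proof -
  have "(cut_coproduct (Bplus x) :: 'k hopf2)
      = (\<Sum>k\<in>{0..nverts x}. tens (cut_top k [Node x]) (cut_bot k [Node x])) + tens [Node x] []"
    by (simp add: cut_coproduct_def Bplus_def cut_top_all)
  also have "(\<Sum>k\<in>{0..nverts x}. tens (cut_top k [Node x]) (cut_bot k [Node x]) :: 'k hopf2)
      = (\<Sum>k\<in>{0..nverts x}. id_Bplus (tens (cut_top k x) (cut_bot k x)))"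
    by (rule sum.cong) (auto simp: Bplus_def)
  also have "\<dots> = id_Bplus (cut_coproduct x)"
    by (simp add: cut_coproduct_def id_Bplus_sum)
  finally show ?thesis by (simp add: Bplus_def)
qed

lemma is_coproduct_cut_coproduct: "is_coproduct cut_coproduct"
  unfolding is_coproduct_def
  using cut_coproduct_append cut_coproduct_Bplus by (auto simp: cut_coproduct_def)

lemma is_coproduct_unique:
  assumes D1: "is_coproduct D1" and D2: "is_coproduct D2"
  shows "D1 = D2"
proof
  fix z
  show "D1 z = D2 z"
  proof (induction z rule: measure_induct_rule[of "size_list size"])
    case (less z)
    consider "z = []" | x where "z = [Node x]" | t ts where "ts \<noteq> []" "z = [t] @ ts"
      by (metis append_Cons append_Nil neq_Nil_conv ptree.exhaust)
    then show ?case
    proof cases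
      case 1 then show ?thesis using D1 D2 by (simp add: is_coproduct_def)
    next
      case 2
      then have "D1 x = D2 x" using less by simp
      then show ?thesis using D1 D2 2 unfolding is_coproduct_def Bplus_def by metis
    next
      case 3
      then have "D1 [t] = D2 [t]" "D1 ts = D2 ts" using less by (auto simp: neq_Nil_conv)
      then show ?thesis using D1 D2 3 unfolding is_coproduct_def by metis
    qed
  qed
qed

lemma Delta_eq_cut_coproduct: "Delta = cut_coproduct"
  unfolding Delta_def
  using is_coproduct_cut_coproduct is_coproduct_unique by blast

lemma pair_ext_gamma:
  "pair_ext p (Poly_Mapping.single a 1) (gamma y) =
     (case y of [] \<Rightarrow> 0 | t # G \<Rightarrow> if t = dot then p a G else 0)"
  by (cases y) (auto simp: pair_ext_def gamma_def)

lemma pair_tens_Delta: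
  "pair_tens p a b (Delta z) = (\<Sum>k\<in>{0..nverts z}. p a (cut_top k z) * p b (cut_bot k z))"
  by (simp add: Delta_eq_cut_coproduct pair_tens_eq_linear_ext cut_coproduct_def linear_ext_sum tens_def)

lemma is_pairing_unique:
  assumes p1: "is_pairing p1" and p2: "is_pairing (p2 :: pforest \<Rightarrow> pforest \<Rightarrow> 'k::field)"
  shows "p1 = p2"
proof
  fix x
  show "p1 x = p2 x"
  proof (induction x rule: measure_induct_rule[of "size_list size"])
    case (less x)
    consider "x = []" | a where "x = [Node a]" | t ts where "ts \<noteq> []" "x = [t] @ ts"
      by (metis append_Cons append_Nil neq_Nil_conv ptree.exhaust)
    then show ?case
    proof cases
      case 1 then show ?thesis using p1 p2 by (auto simp: is_pairing_def)
    next
      case 2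
      then have "p1 a = p2 a" using less by simp
      then have "p1 [Node a] z = p2 [Node a] z" for z
        using p1 p2 unfolding is_pairing_def Bplus_def pair_ext_gamma by (cases z) auto
      then show ?thesis using 2 by auto
    next
      case 3
      then have IH: "p1 [t] = p2 [t]" "p1 ts = p2 ts" using less by (auto simp: neq_Nil_conv)
      have "p1 ([t] @ ts) z = p2 ([t] @ ts) z" for z
      proof -
        have "p1 ([t] @ ts) z = (\<Sum>k\<in>{0..nverts z}. p1 ts (cut_top k z) * p1 [t] (cut_bot k z))"
          using p1 unfolding is_pairing_def pair_tens_Delta by blast
        moreover have "p2 ([t] @ ts) z = (\<Sum>k\<in>{0..nverts z}. p2 ts (cut_top k z) * p2 [t] (cut_bot k z))"
          using p2 unfolding is_pairing_def pair_tens_Delta by blast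
        ultimately show ?thesis unfolding IH by simp
      qed
      then show ?thesis using 3 by auto
    qed
  qed
qed

lemma pairing_eqI:
  assumes "is_pairing (q :: pforest \<Rightarrow> pforest \<Rightarrow> 'k::field)"
  shows "pairing = q"
  unfolding pairing_def using assms is_pairing_unique by blast

section \<open>Order-compatible bijections between vertex sets\<close>

lemma left_rec_not_prefix: "left_rec s t \<Longrightarrow> \<not> prefix s t \<and> \<not> prefix t s"
  by (induction s t rule: left_rec.induct) auto

lemma left_rec_asym: "left_rec s t \<Longrightarrow> \<not> left_rec t s"
  by (induction s t rule: left_rec.induct) auto

lemma geq_left_iff: "geq_left s t \<longleftrightarrow> left_rec s t"
  using left_rec_not_prefix unfolding geq_left_def geq_high_def by blast

lemma geq_hl_iff: "geq_hl s t \<longleftrightarrow> prefix t s \<or> left_rec s t"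
  unfolding geq_hl_def geq_left_iff geq_high_def ..

lemma geq_hl_antisym: "geq_hl a b \<Longrightarrow> geq_hl b a \<Longrightarrow> a = b"
  unfolding geq_hl_iff using left_rec_not_prefix left_rec_asym prefix_order.antisym by blast

definition compatible :: "nat list \<Rightarrow> nat list \<Rightarrow> nat list \<Rightarrow> nat list \<Rightarrow> bool" where
  "compatible x y sx sy \<longleftrightarrow>
     (geq_high y x \<longrightarrow> geq_left sx sy) \<and>
     (geq_left y x \<longrightarrow> geq_hl sx sy) \<and>
     (geq_high sy sx \<longrightarrow> geq_left x y) \<and>
     (geq_left sy sx \<longrightarrow> geq_hl x y)"

definition order_bijections :: "nat list set \<Rightarrow> nat list set \<Rightarrow> (nat list \<Rightarrow> nat list) set" where
  "order_bijections V W = {\<sigma>. \<sigma> \<in> extensional V \<and> bij_betw \<sigma> V W \<and>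
     (\<forall>x\<in>V. \<forall>y\<in>V. x \<noteq> y \<longrightarrow> compatible x y (\<sigma> x) (\<sigma> y))}"

lemma Sbij_eq_order_bijections: "Sbij F G = order_bijections (Vert F) (Vert G)"
  by (simp add: Sbij_def order_bijections_def compatible_def)

lemma order_bijectionsD:
  assumes "\<sigma> \<in> order_bijections V W"
  shows "\<sigma> \<in> extensional V" "bij_betw \<sigma> V W" "inj_on \<sigma> V" "\<sigma> ` V = W"
    and "\<And>x y. x \<in> V \<Longrightarrow> y \<in> V \<Longrightarrow> x \<noteq> y \<Longrightarrow> compatible x y (\<sigma> x) (\<sigma> y)"
  using assms unfolding order_bijections_def bij_betw_def by auto

lemma finite_order_bijections:
  assumes "finite V" "finite W"
  shows "finite (order_bijections V W)"
proof (rule finite_subset)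
  show "order_bijections V W \<subseteq> PiE V (\<lambda>_. W)"
    unfolding order_bijections_def PiE_def Pi_def bij_betw_def by auto
  show "finite (PiE V (\<lambda>_. W))" using assms by (simp add: finite_PiE)
qed

lemma order_bijections_card_neq:
  "finite V \<Longrightarrow> finite W \<Longrightarrow> card V \<noteq> card W \<Longrightarrow> order_bijections V W = {}"
  using bij_betw_same_card unfolding order_bijections_def by blast

lemma order_bijections_empty:
  "order_bijections {} W = (if W = {} then {\<lambda>_. undefined} else {})"
  unfolding order_bijections_def by (auto simp: bij_betw_def extensional_def)

text \<open>The four conditions only involve ancestry and the left-to-right relation, so they are
  invariant under maps preserving both.\<close>

definition order_iso_on :: "nat list set \<Rightarrow> (nat list \<Rightarrow> nat list) \<Rightarrow> bool" where
  "order_iso_on V f \<longleftrightarrow>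
     (\<forall>a\<in>V. \<forall>b\<in>V. (prefix (f a) (f b) \<longleftrightarrow> prefix a b) \<and> (left_rec (f a) (f b) \<longleftrightarrow> left_rec a b))"

lemma order_iso_on_inj: "order_iso_on V f \<Longrightarrow> inj_on f V"
  unfolding order_iso_on_def inj_on_def by (metis prefix_order.antisym prefix_order.refl)

lemma order_iso_on_inv_into: "order_iso_on V f \<Longrightarrow> order_iso_on (f ` V) (inv_into V f)"
  using order_iso_on_inj[of V f] unfolding order_iso_on_def by auto

lemma compatible_order_iso:
  assumes "order_iso_on V f" "order_iso_on W g" "x \<in> V" "y \<in> V" "a \<in> W" "b \<in> W"
  shows "compatible (f x) (f y) (g a) (g b) = compatible x y a b"
  using assms unfolding order_iso_on_def compatible_def geq_hl_iff geq_left_iff geq_high_def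
  by simp

lemma order_bijections_order_iso:
  assumes "\<sigma> \<in> order_bijections V W" "order_iso_on V f" "order_iso_on W g"
  shows "restrict (g \<circ> \<sigma> \<circ> inv_into V f) (f ` V) \<in> order_bijections (f ` V) (g ` W)"
    (is "?\<tau> \<in> _")
proof -
  have injf: "inj_on f V" and injg: "inj_on g W" using assms(2,3) by (simp_all add: order_iso_on_inj)
  have \<tau>: "?\<tau> (f v) = g (\<sigma> v)" if "v \<in> V" for v using that injf by simp
  have "bij_betw (g \<circ> \<sigma> \<circ> inv_into V f) (f ` V) (g ` W)"
    using bij_betw_trans[OF bij_betw_trans[OF bij_betw_inv_into[OF inj_on_imp_bij_betw[OF injf]]
          order_bijectionsD(2)[OF assms(1)]] inj_on_imp_bij_betw[OF injg]]
    by (simp add: comp_assoc)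
  then have "bij_betw ?\<tau> (f ` V) (g ` W)"
    by (rule bij_betw_cong[THEN iffD1, rotated]) simp
  moreover have "compatible x' y' (?\<tau> x') (?\<tau> y')"
    if x'y': "x' \<in> f ` V" "y' \<in> f ` V" "x' \<noteq> y'" for x' y'
  proof -
    obtain x y where xy: "x \<in> V" "y \<in> V" "x' = f x" "y' = f y" using x'y'(1,2) by blast
    then have "\<sigma> x \<in> W" "\<sigma> y \<in> W" "x \<noteq> y"
      using x'y'(3) order_bijectionsD(4)[OF assms(1)] by auto
    then show ?thesis
      using xy \<tau> compatible_order_iso[OF assms(2,3)] order_bijectionsD(5)[OF assms(1)] by simp
  qed
  ultimately show ?thesis unfolding order_bijections_def by simp
qed

lemma card_order_bijections_le_iso:
  assumes "finite V" "finite W" "order_iso_on V f" "order_iso_on W g"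
  shows "card (order_bijections V W) \<le> card (order_bijections (f ` V) (g ` W))"
proof (rule card_inj_on_le)
  let ?M = "\<lambda>\<sigma>. restrict (g \<circ> \<sigma> \<circ> inv_into V f) (f ` V)"
  have injf: "inj_on f V" and injg: "inj_on g W" using assms(3,4) by (simp_all add: order_iso_on_inj)
  show "inj_on ?M (order_bijections V W)"
  proof
    fix \<sigma>1 \<sigma>2 assume s: "\<sigma>1 \<in> order_bijections V W" "\<sigma>2 \<in> order_bijections V W"
      and eq: "?M \<sigma>1 = ?M \<sigma>2"
    show "\<sigma>1 = \<sigma>2"
    proof (rule extensionalityI[OF order_bijectionsD(1)[OF s(1)] order_bijectionsD(1)[OF s(2)]])
      fix v assume v: "v \<in> V"
      then have "g (\<sigma>1 v) = g (\<sigma>2 v)" using fun_cong[OF eq, of "f v"] injf by simp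
      moreover have "\<sigma>1 v \<in> W" "\<sigma>2 v \<in> W" using v s order_bijectionsD(4) by blast+
      ultimately show "\<sigma>1 v = \<sigma>2 v" using injg by (meson inj_onD)
    qed
  qed
  show "?M ` order_bijections V W \<subseteq> order_bijections (f ` V) (g ` W)"
    using order_bijections_order_iso assms(3,4) by blast
  show "finite (order_bijections (f ` V) (g ` W))"
    using assms(1,2) by (simp add: finite_order_bijections)
qed

lemma card_order_bijections_iso:
  assumes "finite V" "finite W" "order_iso_on V f" "order_iso_on W g"
  shows "card (order_bijections (f ` V) (g ` W)) = card (order_bijections V W)"
proof (rule antisym)
  have "card (order_bijections (f ` V) (g ` W))
      \<le> card (order_bijections (inv_into V f ` f ` V) (inv_into W g ` g ` W))"
    using assms by (intro card_order_bijections_le_iso order_iso_on_inv_into) auto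
  also have "inv_into V f ` f ` V = V"
    using assms(3) by (simp add: order_iso_on_inj)
  also have "inv_into W g ` g ` W = W"
    using assms(4) by (simp add: order_iso_on_inj)
  finally show "card (order_bijections (f ` V) (g ` W)) \<le> card (order_bijections V W)" .
qed (rule card_order_bijections_le_iso[OF assms])


definition cross_compatible :: "nat list set \<Rightarrow> nat list set \<Rightarrow> nat list set \<Rightarrow> nat list set \<Rightarrow> bool" where
  "cross_compatible V1 V2 W1 W2 \<longleftrightarrow>
     (\<forall>a\<in>V1. \<forall>b\<in>V2. \<forall>c\<in>W1. \<forall>d\<in>W2. compatible a b c d \<and> compatible b a d c)"

lemma order_bijections_restrict:
  assumes \<sigma>: "\<sigma> \<in> order_bijections V W" and U: "U \<subseteq> V"
  shows "restrict \<sigma> U \<in> order_bijections U (\<sigma> ` U)"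
proof -
  have "inj_on \<sigma> U" using order_bijectionsD(3)[OF \<sigma>] U by (rule inj_on_subset)
  then have "bij_betw (restrict \<sigma> U) U (\<sigma> ` U)"
    by (simp add: bij_betw_def inj_on_def)
  then show ?thesis
    using order_bijectionsD(5)[OF \<sigma>] U unfolding order_bijections_def by auto
qed

lemma order_bijections_glue:
  assumes \<tau>1: "\<tau>1 \<in> order_bijections V1 W1" and \<tau>2: "\<tau>2 \<in> order_bijections V2 W2"
    and disj: "V1 \<inter> V2 = {}" "W1 \<inter> W2 = {}"
    and cross: "cross_compatible V1 V2 W1 W2"
  shows "(\<lambda>v. if v \<in> V1 then \<tau>1 v else \<tau>2 v) \<in> order_bijections (V1 \<union> V2) (W1 \<union> W2)"
    (is "?\<sigma> \<in> _")
proof -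
  have "?\<sigma> \<in> extensional (V1 \<union> V2)"
    using order_bijectionsD(1)[OF \<tau>2] by (auto simp: extensional_def)
  moreover have b1: "bij_betw ?\<sigma> V1 W1"
    using order_bijectionsD(2)[OF \<tau>1] by (rule bij_betw_cong[THEN iffD1, rotated]) simp
  have "?\<sigma> v = \<tau>2 v" if "v \<in> V2" for v using that disj(1) by auto
  then have b2: "bij_betw ?\<sigma> V2 W2"
    using order_bijectionsD(2)[OF \<tau>2] bij_betw_cong[of V2 ?\<sigma> \<tau>2 W2] by blast
  have "bij_betw ?\<sigma> (V1 \<union> V2) (W1 \<union> W2)" by (rule bij_betw_combine[OF b1 b2 disj(2)])
  moreover have "compatible x y (?\<sigma> x) (?\<sigma> y)"
    if xy: "x \<in> V1 \<union> V2" "y \<in> V1 \<union> V2" "x \<noteq> y" for x y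
  proof -
    have W1: "\<tau>1 v \<in> W1" if "v \<in> V1" for v using \<tau>1 that by (auto dest: order_bijectionsD(4))
    have W2: "\<tau>2 v \<in> W2" if "v \<in> V2" for v using \<tau>2 that by (auto dest: order_bijectionsD(4))
    consider "x \<in> V1" "y \<in> V1" | "x \<in> V2" "y \<in> V2" | "x \<in> V1" "y \<in> V2" | "x \<in> V2" "y \<in> V1"
      using xy by blast
    then show ?thesis
    proof cases
      case 1 then show ?thesis using xy order_bijectionsD(5)[OF \<tau>1] by simp
    next
      case 2 then show ?thesis using xy disj(1) order_bijectionsD(5)[OF \<tau>2] by auto
    next
      case 3 then show ?thesis using disj(1) W1 W2 cross unfolding cross_compatible_def by auto
    next
      case 4 then show ?thesis using disj(1) W1 W2 cross unfolding cross_compatible_def by auto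
    qed
  qed
  ultimately show ?thesis unfolding order_bijections_def by blast
qed

lemma card_order_bijections_Un:
  assumes disj: "V1 \<inter> V2 = {}" "W1 \<inter> W2 = {}"
    and cross: "cross_compatible V1 V2 W1 W2"
    and blocks: "\<And>\<sigma>. \<sigma> \<in> order_bijections (V1 \<union> V2) (W1 \<union> W2) \<Longrightarrow> \<sigma> ` V1 = W1"
  shows "card (order_bijections (V1 \<union> V2) (W1 \<union> W2))
           = card (order_bijections V1 W1) * card (order_bijections V2 W2)"
proof -
  let ?S = "order_bijections (V1 \<union> V2) (W1 \<union> W2)"
  have blocks2: "\<sigma> ` V2 = W2" if "\<sigma> \<in> ?S" for \<sigma>
  proof -
    have "\<sigma> ` V1 \<inter> \<sigma> ` V2 = {}"
      using order_bijectionsD(3)[OF that] disj(1) by (metis inj_on_image_Int image_empty Un_upper1 Un_upper2)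
    then show ?thesis using order_bijectionsD(4)[OF that] blocks[OF that] disj(2)
      unfolding image_Un by blast
  qed
  define R where "R \<sigma> = (restrict \<sigma> V1, restrict \<sigma> V2)" for \<sigma> :: "nat list \<Rightarrow> nat list"
  have "bij_betw R ?S (order_bijections V1 W1 \<times> order_bijections V2 W2)"
  proof (rule bij_betw_imageI)
    show "inj_on R ?S"
    proof
      fix \<sigma>1 \<sigma>2 assume s: "\<sigma>1 \<in> ?S" "\<sigma>2 \<in> ?S" and "R \<sigma>1 = R \<sigma>2"
      then have "\<sigma>1 v = \<sigma>2 v" if "v \<in> V1 \<union> V2" for v
        using that unfolding R_def by (metis Pair_inject Un_iff restrict_apply')
      then show "\<sigma>1 = \<sigma>2"
        using order_bijectionsD(1)[OF s(1)] order_bijectionsD(1)[OF s(2)] by (rule extensionalityI[rotated 2])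
    qed
    show "R ` ?S = order_bijections V1 W1 \<times> order_bijections V2 W2"
    proof
      show "R ` ?S \<subseteq> order_bijections V1 W1 \<times> order_bijections V2 W2"
        using order_bijections_restrict blocks blocks2 unfolding R_def by fastforce
      show "order_bijections V1 W1 \<times> order_bijections V2 W2 \<subseteq> R ` ?S"
      proof (clarify)
        fix \<tau>1 \<tau>2 assume \<tau>: "\<tau>1 \<in> order_bijections V1 W1" "\<tau>2 \<in> order_bijections V2 W2"
        let ?\<sigma> = "\<lambda>v. if v \<in> V1 then \<tau>1 v else \<tau>2 v"
        have "R ?\<sigma> = (\<tau>1, \<tau>2)"
          using order_bijectionsD(1)[OF \<tau>(1)] order_bijectionsD(1)[OF \<tau>(2)] disj(1)
          unfolding R_def by (auto simp: fun_eq_iff extensional_def)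
        then show "(\<tau>1, \<tau>2) \<in> R ` ?S"
          using order_bijections_glue[OF \<tau> disj cross] by force
      qed
    qed
  qed
  then show ?thesis by (simp add: bij_betw_same_card card_cartesian_product)
qed

lemma compatible_left_of:
  assumes "left_rec a b" "geq_hl d c" "c \<noteq> d"
  shows "compatible a b c d" "compatible b a d c"
proof -
  have "\<not> prefix a b" "\<not> prefix b a" "\<not> left_rec b a"
    using assms(1) left_rec_not_prefix left_rec_asym by blast+
  moreover have "\<not> geq_hl c d" using assms(2,3) geq_hl_antisym by blast
  ultimately show "compatible a b c d" "compatible b a d c"
    using assms(1,2) unfolding compatible_def geq_hl_iff geq_left_iff geq_high_def by blast+
qed

lemma order_bijections_left_blocks:
  assumes fin: "finite V2" "finite W2"
    and disj: "V1 \<inter> V2 = {}" "W1 \<inter> W2 = {}"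
    and card: "card V2 = card W2"
    and left: "\<forall>a\<in>V1. \<forall>b\<in>V2. left_rec a b"
    and above: "\<forall>c\<in>W1. \<forall>d\<in>W2. geq_hl d c"
    and \<sigma>: "\<sigma> \<in> order_bijections (V1 \<union> V2) (W1 \<union> W2)"
  shows "\<sigma> ` V1 = W1"
proof -
  have inj: "inj_on \<sigma> (V1 \<union> V2)" and im: "\<sigma> ` (V1 \<union> V2) = W1 \<union> W2"
    using order_bijectionsD(3,4)[OF \<sigma>] by auto
  have "inj_on \<sigma> V2" using inj by (rule inj_on_subset) simp
  then have card_im: "card (\<sigma> ` V2) = card W2" using card by (simp add: card_image)
  have sub: "\<sigma> ` V2 \<subseteq> W2"
  proof (rule ccontr)
    assume "\<not> \<sigma> ` V2 \<subseteq> W2"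
    then obtain b where b: "b \<in> V2" "\<sigma> b \<in> W1" using im by blast
    have "\<not> W2 \<subseteq> \<sigma> ` V2"
    proof
      assume "W2 \<subseteq> \<sigma> ` V2"
      then have "W2 = \<sigma> ` V2" using card_im fin by (metis card_subset_eq finite_imageI)
      then show False using b disj(2) by blast
    qed
    then obtain w where w: "w \<in> W2" "w \<notin> \<sigma> ` V2" by blast
    moreover have "w \<in> \<sigma> ` (V1 \<union> V2)" using im w(1) by simp
    ultimately obtain a where a: "a \<in> V1" "\<sigma> a \<in> W2" by blast
    have "a \<noteq> b" using a b disj(1) by blast
    then have "compatible b a (\<sigma> b) (\<sigma> a)" using order_bijectionsD(5)[OF \<sigma>, of b a] a b by blast
    moreover have "left_rec a b" using left a b by blast
    ultimately have "geq_hl (\<sigma> b) (\<sigma> a)" unfolding compatible_def geq_left_iff by blast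
    moreover have "geq_hl (\<sigma> a) (\<sigma> b)" using above a b by blast
    ultimately have "\<sigma> a = \<sigma> b" by (rule geq_hl_antisym[rotated])
    then show False using a b disj(2) by auto
  qed
  then have "\<sigma> ` V2 = W2" using card_im fin(2) by (rule card_subset_eq[rotated])
  moreover have "\<sigma> ` V1 \<inter> \<sigma> ` V2 = {}"
    using inj_on_image_Int[OF inj, of V1 V2] disj(1) by simp
  ultimately show ?thesis using im disj(2) unfolding image_Un by blast
qed

lemma card_order_bijections_left_Un:
  assumes "finite V2" "finite W2"
    and "V1 \<inter> V2 = {}" "W1 \<inter> W2 = {}"
    and "card V2 = card W2"
    and "\<forall>a\<in>V1. \<forall>b\<in>V2. left_rec a b"
    and "\<forall>c\<in>W1. \<forall>d\<in>W2. geq_hl d c"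
  shows "card (order_bijections (V1 \<union> V2) (W1 \<union> W2))
           = card (order_bijections V1 W1) * card (order_bijections V2 W2)"
proof (rule card_order_bijections_Un)
  show "cross_compatible V1 V2 W1 W2"
    unfolding cross_compatible_def
  proof (intro ballI)
    fix a b c d assume "a \<in> V1" "b \<in> V2" "c \<in> W1" "d \<in> W2"
    then have "left_rec a b" "geq_hl d c" "c \<noteq> d" using assms(4,6,7) by auto
    then show "compatible a b c d \<and> compatible b a d c" by (simp add: compatible_left_of)
  qed
  show "\<sigma> ` V1 = W1" if "\<sigma> \<in> order_bijections (V1 \<union> V2) (W1 \<union> W2)" for \<sigma>
    using order_bijections_left_blocks[OF assms that] .
qed (fact assms)+

lemma compatible_root:
  assumes "prefix r b" "r \<noteq> b" "left_rec u d"
  shows "compatible r b u d" "compatible b r d u"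
proof -
  have "\<not> prefix b r" "\<not> left_rec b r" "\<not> left_rec r b"
    using assms(1,2) left_rec_not_prefix prefix_order.antisym by blast+
  moreover have "\<not> prefix u d" "\<not> prefix d u" "\<not> left_rec d u"
    using assms(3) left_rec_not_prefix left_rec_asym by blast+
  ultimately show "compatible r b u d" "compatible b r d u"
    using assms unfolding compatible_def geq_hl_iff geq_left_iff geq_high_def by blast+
qed

text \<open>Condition (1) forces the image of a common ancestor of all vertices to lie to the left
  of every other vertex.\<close>

lemma order_bijections_root_leftmost:
  assumes \<sigma>: "\<sigma> \<in> order_bijections V W" and r: "r \<in> V"
    and root: "\<forall>b\<in>V. b \<noteq> r \<longrightarrow> prefix r b"
    and w: "w \<in> W" "w \<noteq> \<sigma> r"
  shows "left_rec (\<sigma> r) w"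
proof -
  obtain b where b: "b \<in> V" "w = \<sigma> b" using w(1) order_bijectionsD(4)[OF \<sigma>] by auto
  then have "b \<noteq> r" using w(2) by auto
  then show ?thesis
    using order_bijectionsD(5)[OF \<sigma> r b(1)] root b
    unfolding compatible_def geq_high_def geq_left_iff by auto
qed

lemma order_bijections_singleton:
  "order_bijections {r} {u} = {\<lambda>x. if x = r then u else undefined}"
  unfolding order_bijections_def by (auto simp: bij_betw_def extensional_def fun_eq_iff)

lemma card_order_bijections_insert_root:
  assumes nin: "r \<notin> V" "u \<notin> W"
    and root: "\<forall>b\<in>V. prefix r b" and leftmost: "\<forall>w\<in>W. left_rec u w"
  shows "card (order_bijections (insert r V) (insert u W)) = card (order_bijections V W)"
proof -
  have "card (order_bijections ({r} \<union> V) ({u} \<union> W))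
      = card (order_bijections {r} {u}) * card (order_bijections V W)"
  proof (rule card_order_bijections_Un)
    show "cross_compatible {r} V {u} W"
      unfolding cross_compatible_def
    proof (intro ballI)
      fix a b c d assume "a \<in> {r}" "b \<in> V" "c \<in> {u}" "d \<in> W"
      then have "a = r" "c = u" "prefix r b" "r \<noteq> b" "left_rec u d" using root leftmost nin by auto
      then show "compatible a b c d \<and> compatible b a d c" by (simp add: compatible_root)
    qed
    fix \<sigma> assume \<sigma>: "\<sigma> \<in> order_bijections ({r} \<union> V) ({u} \<union> W)"
    have "\<sigma> r = u"
    proof (rule ccontr)
      assume ne: "\<sigma> r \<noteq> u"
      then have "\<sigma> r \<in> W" using order_bijectionsD(4)[OF \<sigma>] by auto
      moreover have "left_rec (\<sigma> r) u"
        using order_bijections_root_leftmost[OF \<sigma>] root ne by auto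
      ultimately show False using leftmost left_rec_asym by blast
    qed
    then show "\<sigma> ` {r} = {u}" by simp
  qed (use nin in auto)
  then show ?thesis by (simp add: order_bijections_singleton)
qed

text \<open>Addresses of the trees after the first \<open>n\<close> ones are obtained by shifting the leading
  index by \<open>n\<close>.\<close>

fun shift :: "nat \<Rightarrow> nat list \<Rightarrow> nat list" where
  "shift n [] = []"
| "shift n (i # r) = (i + n) # r"

lemma shift_shift [simp]: "shift n (shift m x) = shift (n + m) x"
  by (cases x) auto

lemma shift_eq_Nil_iff [simp]: "shift n x = [] \<longleftrightarrow> x = []"
  by (cases x) auto

lemma hd_shift [simp]: "x \<noteq> [] \<Longrightarrow> hd (shift n x) = hd x + n"
  by (cases x) auto

lemma shift_Suc_neq_Cons_0 [simp]: "shift (Suc m) x \<noteq> 0 # y" "0 # y \<noteq> shift (Suc m) x"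
  by (cases x; auto)+

lemma inj_shift: "inj (shift n)"
proof
  fix x y assume "shift n x = shift n y" then show "x = y"
    by (cases x; cases y) auto
qed

lemma forest_verts_from_eq_shift: "forest_verts_from n ts = shift n ` forest_verts_from 0 ts"
proof (induction ts arbitrary: n)
  case Nil then show ?case by simp
next
  case (Cons t ts)
  have "shift n ` Cons 0 ` tree_verts t = Cons n ` tree_verts t" by (auto simp: image_image)
  moreover have "shift n ` shift 1 ` X = shift (Suc n) ` X" for X by (auto simp: image_image)
  ultimately show ?case using Cons[of "Suc n"] Cons[of 1] by (simp add: image_Un)
qed

lemma Vert_Nil [simp]: "Vert [] = {}"
  by (simp add: Vert_def)

lemma Vert_Cons: "Vert (t # ts) = Cons 0 ` tree_verts t \<union> shift 1 ` Vert ts"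
  unfolding Vert_def using forest_verts_from_eq_shift[of 1 ts] by simp

lemma tree_verts_Node: "tree_verts (Node f) = insert [] (Vert f)"
  by (simp add: Vert_def)

lemma Vert_append: "Vert (x @ y) = Vert x \<union> shift (length x) ` Vert y"
proof -
  have "forest_verts_from n (x @ y) = forest_verts_from n x \<union> forest_verts_from (n + length x) y" for n
    by (induction x arbitrary: n) auto
  then show ?thesis unfolding Vert_def using forest_verts_from_eq_shift[of "length x" y] by simp
qed

lemma Vert_hd_bounds: "v \<in> Vert x \<Longrightarrow> v \<noteq> [] \<and> hd v < length x"
proof -
  have "v \<in> forest_verts_from n x \<Longrightarrow> v \<noteq> [] \<and> n \<le> hd v \<and> hd v < n + length x" for n
    by (induction x arbitrary: n) fastforce+
  then show "v \<in> Vert x \<Longrightarrow> v \<noteq> [] \<and> hd v < length x" unfolding Vert_def by fastforce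
qed

lemma Nil_notin_Vert [simp]: "[] \<notin> Vert x"
  using Vert_hd_bounds by blast

lemma finite_Vert [simp]: "finite (Vert F)" and card_Vert: "card (Vert F) = nverts F"
proof -
  have "finite (Vert F) \<and> card (Vert F) = nverts F"
  proof (induction F rule: forest_induct)
    case Nil then show ?case by simp
  next
    case (Node f ts)
    let ?A = "Cons 0 ` insert [] (Vert f)" and ?B = "shift 1 ` Vert ts"
    have "[0] \<notin> Cons 0 ` Vert f" by auto
    then have A: "card ?A = Suc (nverts f)" using Node by (simp add: card_image)
    have B: "card ?B = nverts ts"
      using Node card_image[OF inj_on_subset[OF inj_shift[of 1]]] by simp
    have "card (?A \<union> ?B) = card ?A + card ?B" by (rule card_Un_disjoint) (use Node in auto)
    then show ?case using A B Node unfolding Vert_Cons tree_verts_Node by simp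
  qed
  then show "finite (Vert F)" "card (Vert F) = nverts F" by auto
qed

lemma Vert_eq_empty_iff: "Vert z = {} \<longleftrightarrow> z = []"
proof -
  have "tree_verts t \<noteq> {}" for t by (cases t) simp
  then show ?thesis by (cases z) (auto simp: Vert_Cons)
qed

lemma prefix_shift: "x \<noteq> [] \<Longrightarrow> y \<noteq> [] \<Longrightarrow> prefix (shift n x) (shift n y) \<longleftrightarrow> prefix x y"
  by (cases x; cases y) auto

lemma left_rec_shift: "x \<noteq> [] \<Longrightarrow> y \<noteq> [] \<Longrightarrow> left_rec (shift n x) (shift n y) \<longleftrightarrow> left_rec x y"
  by (cases x; cases y) auto

lemma geq_hl_shift: "x \<noteq> [] \<Longrightarrow> y \<noteq> [] \<Longrightarrow> geq_hl (shift n x) (shift n y) \<longleftrightarrow> geq_hl x y"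
  by (simp add: geq_hl_iff prefix_shift left_rec_shift)

lemma geq_hl_Cons: "geq_hl (n # x) (n # y) \<longleftrightarrow> geq_hl x y"
  by (simp add: geq_hl_iff)

lemma order_iso_on_id: "order_iso_on V (\<lambda>x. x)"
  by (simp add: order_iso_on_def)

lemma order_iso_on_cong: "order_iso_on V f \<Longrightarrow> (\<And>v. v \<in> V \<Longrightarrow> g v = f v) \<Longrightarrow> order_iso_on V g"
  by (simp add: order_iso_on_def)

lemma order_iso_on_Cons: "order_iso_on V g \<Longrightarrow> order_iso_on V (\<lambda>v. n # g v)"
  by (simp add: order_iso_on_def)

lemma order_iso_on_shift:
  "order_iso_on V g \<Longrightarrow> (\<And>v. v \<in> V \<Longrightarrow> g v \<noteq> []) \<Longrightarrow> order_iso_on V (\<lambda>v. shift n (g v))"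
  by (simp add: order_iso_on_def prefix_shift left_rec_shift)

lemma order_iso_on_shift_Vert: "order_iso_on (Vert y) (shift n)"
  by (rule order_iso_on_shift[OF order_iso_on_id]) auto

lemma order_iso_on_conj_Cons: "order_iso_on X g \<Longrightarrow> order_iso_on (Cons n ` X) (\<lambda>v. n # g (tl v))"
  by (simp add: order_iso_on_def)

definition unshift :: "nat \<Rightarrow> nat list \<Rightarrow> nat list" where
  "unshift n v = (hd v - n) # tl v"

lemma unshift_shift [simp]: "x \<noteq> [] \<Longrightarrow> unshift n (shift n x) = x"
  by (cases x) (auto simp: unshift_def)

lemma order_iso_on_conj_shift:
  assumes "order_iso_on X g" "\<And>x. x \<in> X \<Longrightarrow> x \<noteq> [] \<and> g x \<noteq> []"
  shows "order_iso_on (shift n ` X) (\<lambda>v. shift n (g (unshift n v)))"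
  using assms unfolding order_iso_on_def by (auto simp: prefix_shift left_rec_shift)

lemma order_iso_on_insert_Nil:
  assumes "order_iso_on V f" "[] \<notin> V" "\<And>v. v \<in> V \<Longrightarrow> f v \<noteq> []"
  shows "order_iso_on (insert [] V) (\<lambda>r. if r = [] then [] else f r)"
  using assms unfolding order_iso_on_def
  by (auto dest: prefix_Nil[THEN iffD1] split: if_splits)

definition hd_separated :: "nat list set \<Rightarrow> nat list set \<Rightarrow> bool" where
  "hd_separated A B \<longleftrightarrow> (\<forall>a\<in>A. \<forall>b\<in>B. a \<noteq> [] \<and> b \<noteq> [] \<and> hd a < hd b)"

lemma hd_less_left_rec:
  assumes "a \<noteq> []" "b \<noteq> []" "hd a < hd b"
  shows "\<not> prefix a b" "\<not> prefix b a" "left_rec a b" "\<not> left_rec b a"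
  using assms by (cases a; cases b; auto)+

lemma order_iso_on_Un_hd_separated:
  assumes "order_iso_on A f" "order_iso_on B f" "hd_separated A B" "hd_separated (f ` A) (f ` B)"
  shows "order_iso_on (A \<union> B) f"
  unfolding order_iso_on_def
proof (intro ballI)
  have cross: "(prefix (f a) (f b) \<longleftrightarrow> prefix a b) \<and> (left_rec (f a) (f b) \<longleftrightarrow> left_rec a b)
      \<and> (prefix (f b) (f a) \<longleftrightarrow> prefix b a) \<and> (left_rec (f b) (f a) \<longleftrightarrow> left_rec b a)"
    if "a \<in> A" "b \<in> B" for a b
    using hd_less_left_rec[of a b] hd_less_left_rec[of "f a" "f b"] assms(3,4) that
    unfolding hd_separated_def by auto
  fix a b assume "a \<in> A \<union> B" "b \<in> A \<union> B"
  then consider "a \<in> A" "b \<in> A" | "a \<in> B" "b \<in> B" | "a \<in> A" "b \<in> B" | "a \<in> B" "b \<in> A"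
    by blast
  then show "(prefix (f a) (f b) \<longleftrightarrow> prefix a b) \<and> (left_rec (f a) (f b) \<longleftrightarrow> left_rec a b)"
    by cases (use assms(1,2) cross in \<open>auto simp: order_iso_on_def\<close>)
qed

lemma hd_separated_Cons0_shift1:
  assumes "[] \<notin> Y"
  shows "hd_separated (Cons 0 ` X) (shift 1 ` Y)"
  unfolding hd_separated_def
proof (intro ballI)
  fix a b assume "a \<in> Cons 0 ` X" "b \<in> shift 1 ` Y"
  moreover have "y \<noteq> []" if "y \<in> Y" for y using assms that by blast
  ultimately show "a \<noteq> [] \<and> b \<noteq> [] \<and> hd a < hd b" by auto
qed

section \<open>Cuts as ordered splittings\<close>

text \<open>The shape of \<open>Vert z\<close> along the cut into \<open>X = Vert (cut_top k z)\<close> and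
  \<open>Y = Vert (cut_bot k z)\<close>, up to order isomorphism.\<close>

definition ordered_split :: "nat list set \<Rightarrow> nat list set \<Rightarrow> nat list set \<Rightarrow> bool" where
  "ordered_split V X Y \<longleftrightarrow> (\<exists>iX iY. order_iso_on X iX \<and> order_iso_on Y iY \<and>
     iX ` X \<inter> iY ` Y = {} \<and> iX ` X \<union> iY ` Y = V \<and> (\<forall>a\<in>X. \<forall>b\<in>Y. geq_hl (iX a) (iY b)))"

lemma ordered_splitI:
  assumes "order_iso_on X iX" "order_iso_on Y iY" "iX ` X \<inter> iY ` Y = {}" "iX ` X \<union> iY ` Y = V"
    and "\<And>a b. a \<in> X \<Longrightarrow> b \<in> Y \<Longrightarrow> geq_hl (iX a) (iY b)"
  shows "ordered_split V X Y"
  unfolding ordered_split_def using assms by blast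

lemma ordered_splitE:
  assumes "ordered_split V X Y"
  obtains iX iY where "order_iso_on X iX" "order_iso_on Y iY" "iX ` X \<inter> iY ` Y = {}"
    "iX ` X \<union> iY ` Y = V" "\<And>a b. a \<in> X \<Longrightarrow> b \<in> Y \<Longrightarrow> geq_hl (iX a) (iY b)"
  using assms unfolding ordered_split_def by blast

lemma ordered_split_Nil: "ordered_split {} {} {}"
  by (rule ordered_splitI[OF order_iso_on_id order_iso_on_id]) auto

lemma ordered_split_Cons_top:
  assumes split: "ordered_split V X Y" and nil: "[] \<notin> V" "[] \<notin> X"
  shows "ordered_split (Cons 0 ` T \<union> shift 1 ` V) (Cons 0 ` T \<union> shift 1 ` X) Y"
proof -
  obtain iX' iY' where iso: "order_iso_on X iX'" "order_iso_on Y iY'"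
    and disj: "iX' ` X \<inter> iY' ` Y = {}" and un: "iX' ` X \<union> iY' ` Y = V"
    and above: "\<And>a b. a \<in> X \<Longrightarrow> b \<in> Y \<Longrightarrow> geq_hl (iX' a) (iY' b)"
    using split by (rule ordered_splitE) blast
  have nilX: "[] \<notin> iX' ` X" and nilY: "[] \<notin> iY' ` Y" using nil(1) un by auto
  have neX: "x \<noteq> [] \<and> iX' x \<noteq> []" if "x \<in> X" for x
    using that nil(2) nilX by (metis imageI)
  have neY: "iY' y \<noteq> []" if "y \<in> Y" for y using that nilY by (metis imageI)
  define iX where "iX v = (if hd v = 0 then v else shift 1 (iX' (unshift 1 v)))" for v
  define iY where "iY v = shift 1 (iY' v)" for v
  have iX_T: "iX v = v" if "v \<in> Cons 0 ` T" for v using that by (auto simp: iX_def)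
  have iX_X: "iX v = shift 1 (iX' (unshift 1 v))" if "v \<in> shift 1 ` X" for v
    using that neX by (auto simp: iX_def)
  have imT: "iX ` Cons 0 ` T = Cons 0 ` T" using iX_T by simp
  have "iX ` shift 1 ` X = (\<lambda>v. shift 1 (iX' (unshift 1 v))) ` shift 1 ` X"
    by (rule image_cong[OF refl iX_X])
  also have "\<dots> = (\<lambda>x. shift 1 (iX' (unshift 1 (shift 1 x)))) ` X" by (simp only: image_image)
  also have "\<dots> = (\<lambda>x. shift 1 (iX' x)) ` X" by (rule image_cong) (simp_all add: neX)
  also have "\<dots> = shift 1 ` iX' ` X" by (simp only: image_image)
  finally have imX: "iX ` shift 1 ` X = shift 1 ` iX' ` X" .
  have isoX: "order_iso_on (Cons 0 ` T \<union> shift 1 ` X) iX"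
  proof (rule order_iso_on_Un_hd_separated)
    show "order_iso_on (Cons 0 ` T) iX" using order_iso_on_id iX_T by (rule order_iso_on_cong)
    show "order_iso_on (shift 1 ` X) iX"
      using order_iso_on_conj_shift[OF iso(1) neX] iX_X by (rule order_iso_on_cong)
    show "hd_separated (Cons 0 ` T) (shift 1 ` X)" using nil(2) by (rule hd_separated_Cons0_shift1)
    show "hd_separated (iX ` Cons 0 ` T) (iX ` shift 1 ` X)"
      unfolding imT imX using nilX by (rule hd_separated_Cons0_shift1)
  qed
  have isoY: "order_iso_on Y iY" unfolding iY_def using iso(2) neY by (rule order_iso_on_shift)
  have imY: "iY ` Y = shift 1 ` iY' ` Y" by (auto simp: iY_def)
  have "shift 1 ` iX' ` X \<inter> shift 1 ` iY' ` Y = {}"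
    using disj inj_shift by (metis image_Int image_empty)
  moreover have "Cons 0 ` T \<inter> shift 1 ` iY' ` Y = {}" by auto
  ultimately have disjoint: "iX ` (Cons 0 ` T \<union> shift 1 ` X) \<inter> iY ` Y = {}"
    unfolding image_Un imT imX imY by blast
  have union: "iX ` (Cons 0 ` T \<union> shift 1 ` X) \<union> iY ` Y = Cons 0 ` T \<union> shift 1 ` V"
    unfolding image_Un imT imX imY un[symmetric] by blast
  have cut_above: "geq_hl (iX a) (iY b)" if a: "a \<in> Cons 0 ` T \<union> shift 1 ` X" and b: "b \<in> Y" for a b
  proof -
    obtain j q where iYb: "iY b = Suc j # q" using neY[OF b] by (cases "iY' b") (auto simp: iY_def)
    from a consider "a \<in> Cons 0 ` T" | x where "x \<in> X" "a = shift 1 x" by blast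
    then show ?thesis
    proof cases
      case 1 then show ?thesis using iX_T iYb by (auto simp: geq_hl_iff)
    next
      case 2
      then have "iX a = shift 1 (iX' x)" using iX_X neX by auto
      moreover have "geq_hl (iX' x) (iY' b)" using above 2 b by simp
      ultimately show ?thesis using 2 b neX neY by (simp add: iY_def geq_hl_shift)
    qed
  qed
  show ?thesis using isoX isoY disjoint union cut_above by (rule ordered_splitI)
qed

lemma ordered_split_Cons_below:
  assumes split: "ordered_split V X Y" and nil: "[] \<notin> V" "[] \<notin> Y" "[] \<notin> W"
  shows "ordered_split (Cons 0 ` insert [] V \<union> shift 1 ` W) X (Cons 0 ` insert [] Y \<union> shift 1 ` W)"
proof -
  obtain iX' iY' where iso: "order_iso_on X iX'" "order_iso_on Y iY'"
    and disj: "iX' ` X \<inter> iY' ` Y = {}" and un: "iX' ` X \<union> iY' ` Y = V"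
    and above: "\<And>a b. a \<in> X \<Longrightarrow> b \<in> Y \<Longrightarrow> geq_hl (iX' a) (iY' b)"
    using split by (rule ordered_splitE) blast
  have nilX: "[] \<notin> iX' ` X" and nilY: "[] \<notin> iY' ` Y" using nil(1) un by auto
  have neY: "iY' y \<noteq> []" if "y \<in> Y" for y using that nilY by (metis imageI)
  define iX where "iX v = 0 # iX' v" for v
  define iY0 where "iY0 r = (if r = [] then [] else iY' r)" for r
  define iY where "iY v = (if hd v = 0 then 0 # iY0 (tl v) else v)" for v
  let ?Z = "insert [] Y"
  have iY_Z: "iY v = 0 # iY0 (tl v)" if "v \<in> Cons 0 ` ?Z" for v using that by (auto simp: iY_def)
  have iY_W: "iY v = v" if v: "v \<in> shift 1 ` W" for v
  proof -
    obtain w where w: "w \<in> W" "v = shift 1 w" using v by blast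
    then have "w \<noteq> []" using nil(3) by blast
    then have "hd v \<noteq> 0" using w by simp
    then show ?thesis by (simp add: iY_def)
  qed
  have imX: "iX ` X = Cons 0 ` iX' ` X" by (auto simp: iX_def)
  have "iY ` Cons 0 ` ?Z = (\<lambda>v. 0 # iY0 (tl v)) ` Cons 0 ` ?Z"
    by (rule image_cong[OF refl iY_Z])
  also have "\<dots> = Cons 0 ` iY0 ` ?Z" by (simp only: image_image list.sel)
  also have "iY0 ` ?Z = insert [] (iY' ` Y)" using nil(2) by (auto simp: iY0_def)
  finally have imZ: "iY ` Cons 0 ` ?Z = Cons 0 ` insert [] (iY' ` Y)" .
  have imW: "iY ` shift 1 ` W = shift 1 ` W" using iY_W by simp
  have "order_iso_on X iX" unfolding iX_def using iso(1) by (rule order_iso_on_Cons)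
  moreover have "order_iso_on (Cons 0 ` ?Z \<union> shift 1 ` W) iY"
  proof (rule order_iso_on_Un_hd_separated)
    have "order_iso_on ?Z iY0" unfolding iY0_def using iso(2) nil(2) neY by (rule order_iso_on_insert_Nil)
    then show "order_iso_on (Cons 0 ` ?Z) iY" using iY_Z by (rule order_iso_on_conj_Cons[THEN order_iso_on_cong])
    show "order_iso_on (shift 1 ` W) iY" using order_iso_on_id iY_W by (rule order_iso_on_cong)
    show "hd_separated (Cons 0 ` ?Z) (shift 1 ` W)" using nil(3) by (rule hd_separated_Cons0_shift1)
    show "hd_separated (iY ` Cons 0 ` ?Z) (iY ` shift 1 ` W)"
      unfolding imZ imW using nil(3) by (rule hd_separated_Cons0_shift1)
  qed
  moreover have "iX ` X \<inter> iY ` (Cons 0 ` ?Z \<union> shift 1 ` W) = {}"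
    unfolding image_Un imX imZ imW using disj nilX by auto
  moreover have "iX ` X \<union> iY ` (Cons 0 ` ?Z \<union> shift 1 ` W) = Cons 0 ` insert [] V \<union> shift 1 ` W"
    unfolding image_Un imX imZ imW un[symmetric] by blast
  moreover have "geq_hl (iX a) (iY b)" if a: "a \<in> X" and b: "b \<in> Cons 0 ` ?Z \<union> shift 1 ` W" for a b
  proof -
    from b consider "b = [0]" | y where "y \<in> Y" "b = 0 # y" | "b \<in> shift 1 ` W" by blast
    then show ?thesis
    proof cases
      case 1 then show ?thesis by (simp add: iX_def iY_def iY0_def geq_hl_iff)
    next
      case 2
      then have "iY b = 0 # iY' y" using nil(2) by (auto simp: iY_def iY0_def)
      moreover have "geq_hl (iX' a) (iY' y)" using above a 2 by simp
      ultimately show ?thesis by (simp add: iX_def geq_hl_Cons)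
    next
      case 3
      then obtain w where w: "w \<in> W" "b = shift 1 w" by blast
      then have "w \<noteq> []" using nil(3) by blast
      then obtain j q where "b = Suc j # q" using w by (cases w) auto
      then show ?thesis using iY_W 3 by (simp add: iX_def geq_hl_iff)
    qed
  qed
  ultimately show ?thesis by (rule ordered_splitI)
qed

lemma ordered_split_cut:
  "k \<le> nverts z \<Longrightarrow> ordered_split (Vert z) (Vert (cut_top k z)) (Vert (cut_bot k z))"
proof (induction k z rule: cut_top.induct)
  case (1 k)
  then show ?case by (simp add: ordered_split_Nil)
next
  case (2 k f ts)
  show ?case
  proof (cases "Suc (nverts f) \<le> k")
    case True
    let ?k = "k - Suc (nverts f)"
    have top: "cut_top k (Node f # ts) = Node f # cut_top ?k ts"
      and bot: "cut_bot k (Node f # ts) = cut_bot ?k ts"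
      using True by simp_all
    have "ordered_split (Vert ts) (Vert (cut_top ?k ts)) (Vert (cut_bot ?k ts))"
      using 2 True by simp
    then show ?thesis unfolding top bot Vert_Cons by (rule ordered_split_Cons_top) simp_all
  next
    case False
    have top: "cut_top k (Node f # ts) = cut_top k f"
      and bot: "cut_bot k (Node f # ts) = Node (cut_bot k f) # ts"
      using False by simp_all
    have "ordered_split (Vert f) (Vert (cut_top k f)) (Vert (cut_bot k f))"
      using 2 False by simp
    then show ?thesis unfolding top bot Vert_Cons tree_verts_Node
      by (rule ordered_split_Cons_below) simp_all
  qed
qed

section \<open>Counting \<open>S(F,G)\<close>\<close>

lemma card_order_bijections_append_cut:
  assumes "nverts y \<le> nverts z"
  shows "card (order_bijections (Vert (x @ y)) (Vert z))
     = card (order_bijections (Vert y) (Vert (cut_top (nverts y) z)))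
       * card (order_bijections (Vert x) (Vert (cut_bot (nverts y) z)))"
proof -
  let ?X = "Vert (cut_top (nverts y) z)" and ?Y = "Vert (cut_bot (nverts y) z)"
  obtain iX iY where iso: "order_iso_on ?X iX" "order_iso_on ?Y iY"
    and disj: "iX ` ?X \<inter> iY ` ?Y = {}" and un: "iX ` ?X \<union> iY ` ?Y = Vert z"
    and above: "\<And>a b. a \<in> ?X \<Longrightarrow> b \<in> ?Y \<Longrightarrow> geq_hl (iX a) (iY b)"
    using ordered_split_cut[OF assms] by (rule ordered_splitE) blast
  let ?V2 = "shift (length x) ` Vert y"
  have "card (order_bijections (Vert x \<union> ?V2) (iY ` ?Y \<union> iX ` ?X))
      = card (order_bijections (Vert x) (iY ` ?Y)) * card (order_bijections ?V2 (iX ` ?X))"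
  proof (rule card_order_bijections_left_Un)
    have "hd a < length x" "length x \<le> hd b" if "a \<in> Vert x" "b \<in> ?V2" for a b
      using that Vert_hd_bounds by auto
    then show "Vert x \<inter> ?V2 = {}" by fastforce
    show "iY ` ?Y \<inter> iX ` ?X = {}" using disj by blast
    show "card ?V2 = card (iX ` ?X)"
      using order_iso_on_inj[OF order_iso_on_shift_Vert] order_iso_on_inj[OF iso(1)] assms
      by (simp add: card_image card_Vert nverts_cut_top)
    show "\<forall>a\<in>Vert x. \<forall>b\<in>?V2. left_rec a b"
    proof (intro ballI)
      fix a b assume a: "a \<in> Vert x" and "b \<in> ?V2"
      then obtain b' where b': "b' \<in> Vert y" "b = shift (length x) b'" by blast
      have "a \<noteq> []" "b \<noteq> []" "hd a < hd b" using Vert_hd_bounds[OF a] Vert_hd_bounds[OF b'(1)] b' by auto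
      then show "left_rec a b" by (rule hd_less_left_rec)
    qed
    show "\<forall>c\<in>iY ` ?Y. \<forall>d\<in>iX ` ?X. geq_hl d c" using above by blast
  qed auto
  moreover have "Vert x \<union> ?V2 = Vert (x @ y)" by (simp add: Vert_append)
  moreover have "iY ` ?Y \<union> iX ` ?X = Vert z" using un by blast
  moreover have "card (order_bijections ?V2 (iX ` ?X)) = card (order_bijections (Vert y) ?X)"
    using order_iso_on_shift_Vert iso(1) by (intro card_order_bijections_iso) auto
  moreover have "card (order_bijections (Vert x) (iY ` ?Y)) = card (order_bijections (Vert x) ?Y)"
    using card_order_bijections_iso[OF _ _ order_iso_on_id iso(2), of "Vert x"] by simp
  ultimately show ?thesis by simp
qed

lemma card_order_bijections_append:
  "card (order_bijections (Vert (x @ y)) (Vert z)) =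
     (\<Sum>k\<in>{0..nverts z}. card (order_bijections (Vert y) (Vert (cut_top k z)))
                         * card (order_bijections (Vert x) (Vert (cut_bot k z))))"
proof (cases "nverts y \<le> nverts z")
  case True
  let ?f = "\<lambda>k. card (order_bijections (Vert y) (Vert (cut_top k z)))
                  * card (order_bijections (Vert x) (Vert (cut_bot k z)))"
  have "?f k = 0" if "k \<in> {0..nverts z} - {nverts y}" for k
    using that by (simp add: order_bijections_card_neq card_Vert nverts_cut_top)
  then have "sum ?f {0..nverts z} = sum ?f {nverts y}"
    using True by (intro sum.mono_neutral_right) auto
  then show ?thesis using card_order_bijections_append_cut[OF True] by simp
next
  case False
  then have "order_bijections (Vert (x @ y)) (Vert z) = {}"
    by (simp add: order_bijections_card_neq card_Vert)
  moreover have "order_bijections (Vert y) (Vert (cut_top k z)) = {}" if "k \<le> nverts z" for k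
    using that False by (simp add: order_bijections_card_neq card_Vert nverts_cut_top)
  ultimately show ?thesis by simp
qed

lemma Vert_Bplus: "Vert (Bplus x) = insert [0] (Cons 0 ` Vert x)"
  unfolding Bplus_def Vert_Cons tree_verts_Node by simp

lemma card_order_bijections_Bplus_dot:
  "card (order_bijections (Vert (Bplus x)) (Vert (dot # G))) = card (order_bijections (Vert x) (Vert G))"
proof -
  have "card (order_bijections (insert [0] (Cons 0 ` Vert x)) (insert [0] (shift 1 ` Vert G)))
      = card (order_bijections (Cons 0 ` Vert x) (shift 1 ` Vert G))"
  proof (rule card_order_bijections_insert_root)
    show "\<forall>w\<in>shift 1 ` Vert G. left_rec [0] w"
    proof
      fix w assume "w \<in> shift 1 ` Vert G"
      then obtain v where "v \<in> Vert G" "w = shift 1 v" by blast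
      then obtain i q where "w = Suc i # q" by (cases v) auto
      then show "left_rec [0] w" by simp
    qed
  qed (auto simp: image_iff)
  also have "\<dots> = card (order_bijections (Vert x) (Vert G))"
    by (rule card_order_bijections_iso) (auto intro: order_iso_on_shift_Vert order_iso_on_Cons[OF order_iso_on_id])
  finally show ?thesis by (simp add: Vert_Bplus Vert_Cons)
qed

lemma order_bijections_Bplus_not_dot:
  assumes "t \<noteq> dot"
  shows "order_bijections (Vert (Bplus x)) (Vert (t # G)) = {}"
proof (rule ccontr)
  obtain d c where "t = Node (d # c)" using assms by (cases t) (auto simp: neq_Nil_conv)
  then have W: "[0] \<in> Vert (t # G)" "[0, 0] \<in> Vert (t # G)"
    by (cases d; auto simp: Vert_Cons)+
  assume "order_bijections (Vert (Bplus x)) (Vert (t # G)) \<noteq> {}"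
  then obtain \<sigma> where \<sigma>: "\<sigma> \<in> order_bijections (Vert (Bplus x)) (Vert (t # G))" by blast
  have leftmost: "left_rec (\<sigma> [0]) w" if "w \<in> Vert (t # G)" "w \<noteq> \<sigma> [0]" for w
    using order_bijections_root_leftmost[OF \<sigma> _ _ that] by (auto simp: Vert_Bplus)
  show False
  proof (cases "\<sigma> [0] = [0]")
    case True
    then show False using leftmost[OF W(2)] by simp
  next
    case False
    then have "left_rec (\<sigma> [0]) [0]" using leftmost[OF W(1)] by simp
    then show False by (cases "\<sigma> [0]") auto
  qed
qed

definition count_pairing :: "pforest \<Rightarrow> pforest \<Rightarrow> 'k::field" where
  "count_pairing F G = of_nat (card (Sbij F G))"

lemma is_pairing_count_pairing: "is_pairing count_pairing"
  unfolding is_pairing_def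
proof (intro conjI allI)
  show "count_pairing [] z = eps z" for z
    by (cases "z = []") (simp_all add: count_pairing_def Sbij_eq_order_bijections
        order_bijections_empty eps_def Vert_eq_empty_iff)
  show "count_pairing (x @ y) z = pair_tens count_pairing y x (Delta z)" for x y z
    by (simp add: pair_tens_Delta count_pairing_def Sbij_eq_order_bijections card_order_bijections_append)
  show "count_pairing (Bplus x) y = pair_ext count_pairing (Poly_Mapping.single x 1) (gamma y)" for x y
  proof (cases y)
    case Nil
    then have "order_bijections (Vert (Bplus x)) (Vert y) = {}"
      by (intro order_bijections_card_neq) (auto simp: Vert_Bplus)
    then show ?thesis using Nil by (simp add: pair_ext_gamma count_pairing_def Sbij_eq_order_bijections)
  next
    case (Cons t G)
    then show ?thesis
      by (cases "t = dot") (simp_all add: pair_ext_gamma count_pairing_def Sbij_eq_order_bijections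
          card_order_bijections_Bplus_dot order_bijections_Bplus_not_dot)
  qed
qed

theorem theorem24:
  fixes F G :: pforest
  shows "(pairing F G :: 'k::field) = of_nat (card (Sbij F G))"
proof -
  have "(pairing :: pforest \<Rightarrow> pforest \<Rightarrow> 'k) = count_pairing"
    by (rule pairing_eqI[OF is_pairing_count_pairing])
  then show ?thesis by (simp add: count_pairing_def)
qed

end
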